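(* Let $\mathcal{C}=\{C_1,\dots,C_k\}\subset\mathbb{P}^2_{\mathbb{C}}$ be a $d$-arrangement of $k\geq 3$ curves with $t_k=0$. Then the Levi graph $G$ of $\mathcal{C}$ contains an induced cycle of length $6$.
   Context: A $d$-arrangement is an arrangement $\mathcal{C}=\{C_1,\dots,C_k\}$ of $k\geq 3$ smooth plane curves all of the same degree $d\geq 1$ such that the singular locus $\mathrm{Sing}(\mathcal{C})$ consists only of ordinary intersection points (locally like intersections of lines). For $r\geq 2$, $t_r$ denotes the number of points of $\mathrm{Sing}(\mathcal{C})$ lying on exactly $r$ curves of $\mathcal{C}$; thus $t_k=0$ means no point lies on all $k$ curves. The Levi graph of $\mathcal{C}$ is the bipartite graph with one vertex for each point $p\in\mathrm{Sing}(\mathcal{C})$, one vertex for each curve $C_j$, and an edge between the vertex of $p$ and the vertex of $C_j$ iff $p\in C_j$. *)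

theory Defs
  imports Complex_Main
begin

type_synonym pt3 = "complex \<times> complex \<times> complex"

definition smult3 :: "complex \<Rightarrow> pt3 \<Rightarrow> pt3" where
  "smult3 a = (\<lambda>(x,y,z). (a*x, a*y, a*z))"

definition proj :: "pt3 \<Rightarrow> pt3 set" where
  "proj v = {smult3 a v | a. a \<noteq> 0}"

definition P2 :: "pt3 set set" where
  "P2 = {proj v | v. v \<noteq> (0,0,0)}"

text \<open>A homogeneous polynomial of degree d in x,y,z is given by its coefficient function c:
  c i j is the coefficient of x^i y^j z^(d-i-j) (only i+j \<le> d matters).\<close>

definition hpoly :: "nat \<Rightarrow> (nat \<Rightarrow> nat \<Rightarrow> complex) \<Rightarrow> pt3 \<Rightarrow> complex" where
  "hpoly d c = (\<lambda>(x,y,z). \<Sum>i\<le>d. \<Sum>j\<le>d-i. c i j * x^i * y^j * z^(d-i-j))"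

definition hpoly_dx :: "nat \<Rightarrow> (nat \<Rightarrow> nat \<Rightarrow> complex) \<Rightarrow> pt3 \<Rightarrow> complex" where
  "hpoly_dx d c = (\<lambda>(x,y,z). \<Sum>i\<le>d. \<Sum>j\<le>d-i. c i j * of_nat i * x^(i-1) * y^j * z^(d-i-j))"

definition hpoly_dy :: "nat \<Rightarrow> (nat \<Rightarrow> nat \<Rightarrow> complex) \<Rightarrow> pt3 \<Rightarrow> complex" where
  "hpoly_dy d c = (\<lambda>(x,y,z). \<Sum>i\<le>d. \<Sum>j\<le>d-i. c i j * of_nat j * x^i * y^(j-1) * z^(d-i-j))"

definition hpoly_dz :: "nat \<Rightarrow> (nat \<Rightarrow> nat \<Rightarrow> complex) \<Rightarrow> pt3 \<Rightarrow> complex" where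
  "hpoly_dz d c = (\<lambda>(x,y,z). \<Sum>i\<le>d. \<Sum>j\<le>d-i.
       c i j * of_nat (d-i-j) * x^i * y^j * z^(d-i-j-1))"

definition hgrad :: "nat \<Rightarrow> (nat \<Rightarrow> nat \<Rightarrow> complex) \<Rightarrow> pt3 \<Rightarrow> pt3" where
  "hgrad d c v = (hpoly_dx d c v, hpoly_dy d c v, hpoly_dz d c v)"

definition cross3 :: "pt3 \<Rightarrow> pt3 \<Rightarrow> pt3" where
  "cross3 = (\<lambda>(a1,a2,a3) (b1,b2,b3). (a2*b3 - a3*b2, a3*b1 - a1*b3, a1*b2 - a2*b1))"

definition curve :: "nat \<Rightarrow> (nat \<Rightarrow> nat \<Rightarrow> complex) \<Rightarrow> pt3 set set" where
  "curve d c = {proj v | v. v \<noteq> (0,0,0) \<and> hpoly d c v = 0}"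

definition smooth_curve :: "nat \<Rightarrow> (nat \<Rightarrow> nat \<Rightarrow> complex) \<Rightarrow> bool" where
  "smooth_curve d c \<longleftrightarrow> (\<exists>i j. i + j \<le> d \<and> c i j \<noteq> 0) \<and>
     (\<forall>v. v \<noteq> (0,0,0) \<and> hpoly d c v = 0 \<longrightarrow> hgrad d c v \<noteq> (0,0,0))"

definition sing_locus :: "nat \<Rightarrow> nat \<Rightarrow> (nat \<Rightarrow> nat \<Rightarrow> nat \<Rightarrow> complex) \<Rightarrow> pt3 set set" where
  "sing_locus d k cs = {P. \<exists>i j. i < k \<and> j < k \<and> i \<noteq> j \<and> P \<in> curve d (cs i) \<and> P \<in> curve d (cs j)}"

text \<open>A d-arrangement of k curves C_i = V(cs i), i < k: distinct smooth curves of degree d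
  whose singular points are ordinary (the curves through such a point have pairwise
  distinct tangent lines there).\<close>

definition d_arrangement :: "nat \<Rightarrow> nat \<Rightarrow> (nat \<Rightarrow> nat \<Rightarrow> nat \<Rightarrow> complex) \<Rightarrow> bool" where
  "d_arrangement d k cs \<longleftrightarrow> d \<ge> 1 \<and> k \<ge> 3 \<and>
     (\<forall>i<k. smooth_curve d (cs i)) \<and>
     (\<forall>i<k. \<forall>j<k. i \<noteq> j \<longrightarrow> curve d (cs i) \<noteq> curve d (cs j)) \<and>
     (\<forall>i<k. \<forall>j<k. \<forall>v. i \<noteq> j \<and> v \<noteq> (0,0,0) \<and> hpoly d (cs i) v = 0 \<and> hpoly d (cs j) v = 0
        \<longrightarrow> cross3 (hgrad d (cs i) v) (hgrad d (cs j) v) \<noteq> (0,0,0))"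

definition t_count :: "nat \<Rightarrow> nat \<Rightarrow> (nat \<Rightarrow> nat \<Rightarrow> nat \<Rightarrow> complex) \<Rightarrow> nat \<Rightarrow> nat" where
  "t_count d k cs r = card {P \<in> sing_locus d k cs. card {i. i < k \<and> P \<in> curve d (cs i)} = r}"

definition levi_vertices :: "nat \<Rightarrow> nat \<Rightarrow> (nat \<Rightarrow> nat \<Rightarrow> nat \<Rightarrow> complex) \<Rightarrow> (pt3 set + nat) set" where
  "levi_vertices d k cs = Inl ` sing_locus d k cs \<union> Inr ` {..<k}"

fun levi_adj :: "nat \<Rightarrow> nat \<Rightarrow> (nat \<Rightarrow> nat \<Rightarrow> nat \<Rightarrow> complex) \<Rightarrow> pt3 set + nat \<Rightarrow> pt3 set + nat \<Rightarrow> bool" where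
  "levi_adj d k cs (Inl P) (Inr i) \<longleftrightarrow> P \<in> sing_locus d k cs \<and> i < k \<and> P \<in> curve d (cs i)"
| "levi_adj d k cs (Inr i) (Inl P) \<longleftrightarrow> P \<in> sing_locus d k cs \<and> i < k \<and> P \<in> curve d (cs i)"
| "levi_adj d k cs _ _ \<longleftrightarrow> False"

definition induced_cycle :: "'v set \<Rightarrow> ('v \<Rightarrow> 'v \<Rightarrow> bool) \<Rightarrow> 'v list \<Rightarrow> bool" where
  "induced_cycle V E cyc \<longleftrightarrow> length cyc \<ge> 3 \<and> distinct cyc \<and> set cyc \<subseteq> V \<and>
     (\<forall>i<length cyc. \<forall>j<length cyc.
        E (cyc ! i) (cyc ! j) \<longleftrightarrow> (j = Suc i mod length cyc \<or> i = Suc j mod length cyc))"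

end

theory Submission
  imports Defs "HOL-Analysis.Analysis" "HOL-Computational_Algebra.Fundamental_Theorem_Algebra"
    "HOL-Computational_Algebra.Field_as_Ring" "Subresultants.Subresultant_Gcd"
begin

(* Among the pairs of distinct curves of the arrangement choose C_i, C_j with the fewest common
   points.  Any two plane curves meet (a resultant argument), and transversal curves meet in
   finitely many points (their common zeros are isolated and P^2 is compact), so this number is
   positive and finite.  As t_k = 0, some P in C_i \<inter> C_j misses a third curve C_l.  If
   C_j \<inter> C_l were contained in C_i it would lie in (C_i \<inter> C_j) - {P}, contradicting
   minimality; so there is Q in C_j \<inter> C_l - C_i, and likewise R in C_l \<inter> C_i - C_j.
   Then P, C_j, Q, C_l, R, C_i is an induced hexagon of the Levi graph. *)

section \<open>Vectors in C^3\<close>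

definition dot3 :: "pt3 \<Rightarrow> pt3 \<Rightarrow> complex" where
  "dot3 a b = fst a * fst b + fst (snd a) * fst (snd b) + snd (snd a) * snd (snd b)"

lemma dot3_Pair [simp]: "dot3 (a1, a2, a3) (b1, b2, b3) = a1 * b1 + a2 * b2 + a3 * b3"
  by (simp add: dot3_def)

lemma dot3_commute: "dot3 a b = dot3 b a"
  by (simp add: dot3_def mult.commute)

lemma smult3_Pair [simp]: "smult3 a (x, y, z) = (a * x, a * y, a * z)"
  by (simp add: smult3_def)

lemma smult3_eq: "smult3 a v = (a * fst v, a * fst (snd v), a * snd (snd v))"
  by (cases v) simp

lemma smult3_zero_left [simp]: "smult3 0 v = (0, 0, 0)"
  by (cases v) simp

lemma smult3_one [simp]: "smult3 1 v = v"
  by (cases v) simp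

lemma smult3_smult3: "smult3 a (smult3 b v) = smult3 (a * b) v"
  by (cases v) (simp add: mult.assoc)

lemma smult3_eq_zero_iff: "smult3 a v = (0, 0, 0) \<longleftrightarrow> a = 0 \<or> v = (0, 0, 0)"
  by (cases v) auto

lemma smult3_of_real: "smult3 (of_real r) v = r *\<^sub>R v"
  by (cases v) (simp add: scaleR_conv_of_real)

lemma dot3_smult3_right: "dot3 a (smult3 t b) = t * dot3 a b"
  by (cases a, cases b) (simp add: algebra_simps)

lemma dot3_has_derivative: "(dot3 e has_derivative dot3 e) F"
  unfolding dot3_def[abs_def]
  by (rule derivative_eq_intros refl)+

definition cnj3 :: "pt3 \<Rightarrow> pt3" where
  "cnj3 v = (cnj (fst v), cnj (fst (snd v)), cnj (snd (snd v)))"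

lemma dot3_cnj3_self_nonzero:
  assumes "v \<noteq> (0, 0, 0)"
  shows "dot3 (cnj3 v) v \<noteq> 0"
proof (cases v)
  case (fields x y z)
  have "dot3 (cnj3 v) v = x * cnj x + y * cnj y + z * cnj z"
    by (simp add: fields cnj3_def mult.commute)
  also have "\<dots> = of_real ((cmod x)\<^sup>2 + (cmod y)\<^sup>2 + (cmod z)\<^sup>2)"
    by (simp only: of_real_add complex_norm_square)
  finally have "dot3 (cnj3 v) v = of_real ((cmod x)\<^sup>2 + (cmod y)\<^sup>2 + (cmod z)\<^sup>2)" .
  moreover have "(cmod x)\<^sup>2 > 0 \<or> (cmod y)\<^sup>2 > 0 \<or> (cmod z)\<^sup>2 > 0"
    using assms fields by auto
  then have "(cmod x)\<^sup>2 + (cmod y)\<^sup>2 + (cmod z)\<^sup>2 > 0"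
    using zero_le_power2[of "cmod x"] zero_le_power2[of "cmod y"] zero_le_power2[of "cmod z"]
    by linarith
  ultimately show ?thesis
    by (simp del: of_real_add of_real_power)
qed

(* Cramer's rule: up to the factor det(a, b, e), the vectors b \<times> e, e \<times> a, a \<times> b are
   the basis dual to a, b, e under the bilinear form dot3. *)
lemma smult3_triple_product:
  "smult3 (dot3 e (Defs.cross3 a b)) h
     = smult3 (dot3 h a) (Defs.cross3 b e) + smult3 (dot3 h b) (Defs.cross3 e a)
       + smult3 (dot3 h e) (Defs.cross3 a b)"
  by (cases a, cases b, cases e, cases h) (simp add: Defs.cross3_def algebra_simps)

(* The common kernel of u1 and u2 is spanned by v.  It is cut down by cnj3 v rather than by v
   itself because dot3 v v may vanish for v \<noteq> 0. *)
lemma dot3_kernel_trivial: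
  assumes "Defs.cross3 u1 u2 \<noteq> (0, 0, 0)" "v \<noteq> (0, 0, 0)" "dot3 v u1 = 0" "dot3 v u2 = 0"
    and "dot3 h u1 = 0" "dot3 h u2 = 0" "dot3 h (cnj3 v) = 0"
  shows "h = (0, 0, 0)"
proof -
  have det: "dot3 (cnj3 v) (Defs.cross3 u1 u2) \<noteq> 0"
  proof
    assume "dot3 (cnj3 v) (Defs.cross3 u1 u2) = 0"
    then have "smult3 (dot3 v (cnj3 v)) (Defs.cross3 u1 u2) = (0, 0, 0)"
      using smult3_triple_product[of "cnj3 v" u1 u2 v] assms(3,4)
      by (cases "Defs.cross3 u1 u2") simp
    with assms(1) dot3_cnj3_self_nonzero[OF assms(2)] show False
      by (simp add: smult3_eq_zero_iff dot3_commute)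
  qed
  have "smult3 (dot3 (cnj3 v) (Defs.cross3 u1 u2)) h = (0, 0, 0)"
    using smult3_triple_product[of "cnj3 v" u1 u2 h] assms(5-7) by simp
  with det show ?thesis
    by (simp add: smult3_eq_zero_iff)
qed

section \<open>Homogeneous forms\<close>

lemma hpoly_Pair: "hpoly d c v = (\<Sum>i\<le>d. \<Sum>j\<le>d-i. c i j * fst v ^ i * fst (snd v) ^ j * snd (snd v) ^ (d-i-j))"
  by (cases v) (simp add: hpoly_def)

lemma hpoly_smult3: "hpoly d c (smult3 a v) = a ^ d * hpoly d c v"
proof -
  have "(a * x) ^ i * (a * y) ^ j * (a * z) ^ (d - i - j) = a ^ d * (x ^ i * y ^ j * z ^ (d - i - j))"
    if "i + j \<le> d" for i j and x y z :: complex
  proof -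
    have "a ^ d = a ^ i * a ^ j * a ^ (d - i - j)"
      using that by (simp flip: power_add)
    then show ?thesis by (simp add: power_mult_distrib)
  qed
  then show ?thesis
    by (cases v) (simp add: hpoly_def sum_distrib_left mult.assoc mult.left_commute[of _ "a ^ d"])
qed

lemma hpoly_origin: "d \<ge> 1 \<Longrightarrow> hpoly d c (0, 0, 0) = 0"
  using hpoly_smult3[of d c 0 "(0, 0, 0)"] by (simp add: power_0_left)

lemma dot3_hgrad:
  "dot3 (hgrad d c (x, y, z)) (h1, h2, h3) = (\<Sum>i\<le>d. \<Sum>j\<le>d-i. c i j *
     (of_nat i * x^(i-1) * y^j * z^(d-i-j) * h1 + of_nat j * x^i * y^(j-1) * z^(d-i-j) * h2
      + of_nat (d-i-j) * x^i * y^j * z^(d-i-j-1) * h3))"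
  by (simp add: hgrad_def hpoly_dx_def hpoly_dy_def hpoly_dz_def sum_distrib_right
      flip: sum.distrib) (simp add: algebra_simps)

lemma euler_monomial:
  fixes x y z :: complex
  shows "of_nat i * x^(i-1) * y^j * z^m * x + of_nat j * x^i * y^(j-1) * z^m * y
     + of_nat m * x^i * y^j * z^(m-1) * z = of_nat (i + j + m) * (x^i * y^j * z^m)"
proof -
  have pow: "of_nat n * w^(n-1) * w = of_nat n * w^n" for n and w :: complex
    by (cases n) auto
  have "of_nat i * x^(i-1) * y^j * z^m * x + of_nat j * x^i * y^(j-1) * z^m * y
      + of_nat m * x^i * y^j * z^(m-1) * z
      = (of_nat i * x^(i-1) * x) * (y^j * z^m) + (of_nat j * y^(j-1) * y) * (x^i * z^m)
        + (of_nat m * z^(m-1) * z) * (x^i * y^j)"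
    by (simp add: algebra_simps)
  also have "\<dots> = of_nat i * x^i * (y^j * z^m) + of_nat j * y^j * (x^i * z^m)
        + of_nat m * z^m * (x^i * y^j)"
    by (simp only: pow)
  finally show ?thesis
    by (simp add: algebra_simps)
qed

lemma euler: "dot3 (hgrad d c v) v = of_nat d * hpoly d c v"
proof (cases v)
  case (fields x y z)
  have "dot3 (hgrad d c v) v = (\<Sum>i\<le>d. \<Sum>j\<le>d-i. c i j *
     (of_nat i * x^(i-1) * y^j * z^(d-i-j) * x + of_nat j * x^i * y^(j-1) * z^(d-i-j) * y
      + of_nat (d-i-j) * x^i * y^j * z^(d-i-j-1) * z))"
    by (simp add: fields dot3_hgrad)
  also have "\<dots> = (\<Sum>i\<le>d. \<Sum>j\<le>d-i. of_nat d * (c i j * x^i * y^j * z^(d-i-j)))"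
  proof (intro sum.cong refl)
    fix i j assume "i \<in> {..d}" "j \<in> {..d-i}"
    then show "c i j * (of_nat i * x^(i-1) * y^j * z^(d-i-j) * x
        + of_nat j * x^i * y^(j-1) * z^(d-i-j) * y + of_nat (d-i-j) * x^i * y^j * z^(d-i-j-1) * z)
      = of_nat d * (c i j * x^i * y^j * z^(d-i-j))"
      using euler_monomial[where i=i and j=j and m="d-i-j" and x=x and y=y and z=z]
      by (simp add: algebra_simps)
  qed
  also have "\<dots> = of_nat d * hpoly d c v"
    by (simp add: fields hpoly_def sum_distrib_left)
  finally show ?thesis .
qed

lemma hpoly_has_derivative: "(hpoly d c has_derivative dot3 (hgrad d c v)) (at v)"
proof -
  obtain x y z where v: "v = (x, y, z)" by (cases v)
  have "((\<lambda>w. \<Sum>i\<le>d. \<Sum>j\<le>d-i. c i j * fst w ^ i * fst (snd w) ^ j * snd (snd w) ^ (d-i-j))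
      has_derivative dot3 (hgrad d c v)) (at v)"
    unfolding v
    by (rule has_derivative_eq_rhs, (rule derivative_eq_intros refl)+)
      (simp add: fun_eq_iff dot3_hgrad, intro allI sum.cong refl, simp add: algebra_simps)
  then show ?thesis by (simp add: hpoly_Pair[abs_def])
qed

lemma closed_hpoly_zeros: "closed {v. hpoly d c v = 0}"
proof -
  have "continuous_on UNIV (hpoly d c)"
    by (intro continuous_at_imp_continuous_on ballI has_derivative_continuous[OF hpoly_has_derivative])
  then show ?thesis
    using closed_Collect_eq[of "hpoly d c" "\<lambda>_. 0"] by simp
qed

lemma proj_smult3:
  assumes "a \<noteq> 0"
  shows "proj (smult3 a v) = proj v"
proof (intro equalityI subsetI)
  fix w assume "w \<in> proj (smult3 a v)"
  then obtain b where "b \<noteq> 0" "w = smult3 (b * a) v"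
    unfolding proj_def by (auto simp: smult3_smult3)
  with assms show "w \<in> proj v"
    unfolding proj_def by auto
next
  fix w assume "w \<in> proj v"
  then obtain b where "b \<noteq> 0" "w = smult3 (b / a) (smult3 a v)"
    unfolding proj_def using assms by (auto simp: smult3_smult3)
  with assms show "w \<in> proj (smult3 a v)"
    unfolding proj_def by auto
qed

lemma proj_eqD: "proj v = proj w \<Longrightarrow> \<exists>a. a \<noteq> 0 \<and> w = smult3 a v"
proof -
  assume "proj v = proj w"
  moreover have "w \<in> proj w"
    unfolding proj_def by (cases w) (auto intro: exI[of _ 1])
  ultimately show ?thesis
    unfolding proj_def by blast
qed

lemma proj_in_curve_iff:
  assumes "v \<noteq> (0, 0, 0)"
  shows "proj v \<in> curve d c \<longleftrightarrow> hpoly d c v = 0"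
proof
  assume "proj v \<in> curve d c"
  then obtain w where "proj w = proj v" "hpoly d c w = 0"
    unfolding curve_def by blast
  then show "hpoly d c v = 0"
    by (auto simp: hpoly_smult3 dest!: proj_eqD)
next
  assume "hpoly d c v = 0"
  with assms show "proj v \<in> curve d c"
    unfolding curve_def by blast
qed

section \<open>Any two plane curves meet\<close>

definition poly2 :: "'a::comm_semiring_1 poly poly \<Rightarrow> 'a \<Rightarrow> 'a \<Rightarrow> 'a" where
  "poly2 P x y = poly (map_poly (\<lambda>p. poly p y) P) x"

lemma poly2_mult: "poly2 (P * Q) x y = poly2 P x y * poly2 Q x (y::'a::comm_ring_1)"
proof -
  interpret map_poly_comm_ring_hom "\<lambda>p. poly p y"
    by unfold_locales auto
  show ?thesis
    by (simp add: poly2_def hom_mult)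
qed

lemma poly2_nonzero_somewhere:
  fixes P :: "complex poly poly"
  assumes "P \<noteq> 0"
  shows "\<exists>x y. poly2 P x y \<noteq> 0"
proof -
  obtain y where y: "poly (lead_coeff P) y \<noteq> 0"
    using assms poly_all_0_iff_0 by (metis leading_coeff_0_iff)
  then have "coeff (map_poly (\<lambda>p. poly p y) P) (degree P) \<noteq> 0"
    by (simp add: coeff_map_poly)
  then have "map_poly (\<lambda>p. poly p y) P \<noteq> 0"
    by (metis coeff_0)
  then obtain x where "poly (map_poly (\<lambda>p. poly p y) P) x \<noteq> 0"
    using poly_all_0_iff_0 by blast
  then show ?thesis
    unfolding poly2_def by blast
qed

definition affine_poly :: "nat \<Rightarrow> (nat \<Rightarrow> nat \<Rightarrow> complex) \<Rightarrow> complex poly poly" where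
  "affine_poly d c = (\<Sum>i\<le>d. monom (\<Sum>j\<le>d-i. monom (c i j) j) i)"

lemma poly2_affine_poly: "poly2 (affine_poly d c) x y = hpoly d c (x, y, 1)"
proof -
  interpret map_poly_comm_ring_hom "\<lambda>p. poly p y"
    by unfold_locales auto
  have "map_poly (\<lambda>p. poly p y) (affine_poly d c) = (\<Sum>i\<le>d. monom (\<Sum>j\<le>d-i. c i j * y ^ j) i)"
    by (simp add: affine_poly_def hom_sum map_poly_monom poly_sum poly_monom)
  then show ?thesis
    by (simp add: poly2_def hpoly_def poly_sum poly_monom sum_distrib_left mult_ac)
qed

lemma affine_poly_nonzero:
  assumes "i + j \<le> d" "c i j \<noteq> 0"
  shows "affine_poly d c \<noteq> 0"
proof -
  have "coeff (coeff (affine_poly d c) i) j = c i j"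
    using assms by (simp add: affine_poly_def coeff_sum coeff_monom)
  with assms show ?thesis
    by auto
qed

lemma forms_nonzero_at_common_point:
  assumes "\<exists>i j. i + j \<le> d \<and> c i j \<noteq> 0" and "\<exists>i j. i + j \<le> d \<and> c' i j \<noteq> 0"
  shows "\<exists>x y. hpoly d c (x, y, 1) \<noteq> 0 \<and> hpoly d c' (x, y, 1) \<noteq> 0"
proof -
  have "affine_poly d c * affine_poly d c' \<noteq> 0"
    using assms affine_poly_nonzero mult_eq_0_iff by metis
  then obtain x y where "poly2 (affine_poly d c * affine_poly d c') x y \<noteq> 0"
    using poly2_nonzero_somewhere by blast
  then show ?thesis
    by (metis poly2_mult poly2_affine_poly mult_zero_left mult_zero_right)
qed

lemma coeff_mult_degree_bounds:
  fixes p q :: "'a::comm_semiring_1 poly"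
  assumes "degree p \<le> m" "degree q \<le> n"
  shows "coeff (p * q) (m + n) = coeff p m * coeff q n"
proof -
  have "coeff p i * coeff q (m + n - i) = 0" if "i \<le> m + n" "i \<noteq> m" for i
  proof (cases "i < m")
    case True
    with assms(2) have "coeff q (m + n - i) = 0"
      by (intro coeff_eq_0) linarith
    then show ?thesis by simp
  next
    case False
    with assms(1) that(2) have "coeff p i = 0"
      by (intro coeff_eq_0) linarith
    then show ?thesis by simp
  qed
  then have "coeff (p * q) (m + n) = (\<Sum>i\<le>m + n. if i = m then coeff p m * coeff q n else 0)"
    unfolding coeff_mult by (intro sum.cong refl) auto
  then show ?thesis
    by simp
qed

lemma degree_coeff_linear_power:
  fixes a b :: "'a::comm_semiring_1"
  shows "degree ([:a, b:] ^ n) \<le> n" "coeff ([:a, b:] ^ n) n = b ^ n"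
proof -
  have "degree [:a, b:] \<le> 1"
    by (simp add: degree_pCons_le)
  then have "degree [:a, b:] * n \<le> n"
    using mult_le_mono1 by fastforce
  then show "degree ([:a, b:] ^ n) \<le> n"
    using degree_power_le order_trans by blast
  show "coeff ([:a, b:] ^ n) n = b ^ n"
    by (simp add: coeff_linear_poly_power)
qed

lemma degree_coeff_linear_power_product:
  fixes a1 b1 a2 b2 a3 b3 :: "'a::comm_semiring_1"
  assumes "i + j \<le> d"
  shows "degree ([:a1, b1:] ^ i * [:a2, b2:] ^ j * [:a3, b3:] ^ (d-i-j)) \<le> d"
    and "coeff ([:a1, b1:] ^ i * [:a2, b2:] ^ j * [:a3, b3:] ^ (d-i-j)) d = b1 ^ i * b2 ^ j * b3 ^ (d-i-j)"
proof -
  note p1 = degree_coeff_linear_power[of a1 b1 i]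
  note p2 = degree_coeff_linear_power[of a2 b2 j]
  note p3 = degree_coeff_linear_power[of a3 b3 "d-i-j"]
  have deg12: "degree ([:a1, b1:] ^ i * [:a2, b2:] ^ j) \<le> i + j"
    using degree_mult_le[of "[:a1, b1:] ^ i" "[:a2, b2:] ^ j"] p1(1) p2(1) by linarith
  have "d = (i + j) + (d-i-j)"
    using assms by simp
  then show "degree ([:a1, b1:] ^ i * [:a2, b2:] ^ j * [:a3, b3:] ^ (d-i-j)) \<le> d"
    using degree_mult_le[of "[:a1, b1:] ^ i * [:a2, b2:] ^ j" "[:a3, b3:] ^ (d-i-j)"] deg12 p3(1)
    by linarith
  show "coeff ([:a1, b1:] ^ i * [:a2, b2:] ^ j * [:a3, b3:] ^ (d-i-j)) d = b1 ^ i * b2 ^ j * b3 ^ (d-i-j)"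
    using coeff_mult_degree_bounds[OF deg12 p3(1)] coeff_mult_degree_bounds[OF p1(1) p2(1)] p1 p2 p3
      \<open>d = (i + j) + (d-i-j)\<close> by simp
qed

(* pencil_poly d c q a b is F(a + x b + z q) as a polynomial in z over C[x], F being the form
   with coefficients c; line_poly2 a b u is the linear polynomial a + b x + u z. *)
definition line_poly2 :: "complex \<Rightarrow> complex \<Rightarrow> complex \<Rightarrow> complex poly poly" where
  "line_poly2 a b u = [:[:a, b:], [:u:]:]"

definition pencil_poly :: "nat \<Rightarrow> (nat \<Rightarrow> nat \<Rightarrow> complex) \<Rightarrow> pt3 \<Rightarrow> pt3 \<Rightarrow> pt3 \<Rightarrow> complex poly poly" where
  "pencil_poly d c q a b = (\<Sum>i\<le>d. \<Sum>j\<le>d-i. Polynomial.smult [:c i j:]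
     (line_poly2 (fst a) (fst b) (fst q) ^ i * line_poly2 (fst (snd a)) (fst (snd b)) (fst (snd q)) ^ j
       * line_poly2 (snd (snd a)) (snd (snd b)) (snd (snd q)) ^ (d-i-j)))"

lemma poly2_pencil_poly: "poly2 (pencil_poly d c q a b) z x = hpoly d c (a + smult3 x b + smult3 z q)"
proof -
  interpret map_poly_comm_ring_hom "\<lambda>p. poly p x"
    by unfold_locales auto
  have line: "poly (map_poly (\<lambda>p. poly p x) (line_poly2 a b u)) z = a + x * b + z * u" for a b u
    by (simp add: line_poly2_def map_poly_simps algebra_simps)
  show ?thesis
    by (cases a, cases b, cases q)
      (simp add: poly2_def pencil_poly_def hpoly_def hom_sum hom_mult hom_power map_poly_smult
        poly_sum line mult_ac)
qed

lemma degree_pencil_poly_le: "degree (pencil_poly d c q a b) \<le> d"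
  unfolding pencil_poly_def line_poly2_def
  by (intro degree_sum_le finite_atMost order.trans[OF degree_smult_le]
      degree_coeff_linear_power_product(1)) auto

lemma coeff_pencil_poly: "coeff (pencil_poly d c q a b) d = [:hpoly d c q:]"
proof -
  have "coeff (pencil_poly d c q a b) d
      = (\<Sum>i\<le>d. \<Sum>j\<le>d-i. [:c i j * fst q ^ i * fst (snd q) ^ j * snd (snd q) ^ (d-i-j):])"
    unfolding pencil_poly_def line_poly2_def coeff_sum coeff_smult
  proof (intro sum.cong refl)
    fix i j assume "i \<in> {..d}" "j \<in> {..d-i}"
    then have "i + j \<le> d" by simp
    then show "[:c i j:] * coeff ([:[:fst a, fst b:], [:fst q:]:] ^ i
        * [:[:fst (snd a), fst (snd b):], [:fst (snd q):]:] ^ j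
        * [:[:snd (snd a), snd (snd b):], [:snd (snd q):]:] ^ (d-i-j)) d
      = [:c i j * fst q ^ i * fst (snd q) ^ j * snd (snd q) ^ (d-i-j):]"
      by (simp only: degree_coeff_linear_power_product(2) poly_const_pow)
        (simp add: mult.assoc)
  qed
  then show ?thesis
    by (simp add: sum_to_poly hpoly_Pair)
qed

lemma degree_pencil_poly:
  assumes "hpoly d c q \<noteq> 0"
  shows "degree (pencil_poly d c q a b) = d"
    and "degree (map_poly (\<lambda>p. poly p x) (pencil_poly d c q a b)) = d"
proof -
  have "d \<le> degree (pencil_poly d c q a b)"
    using assms by (intro le_degree) (simp add: coeff_pencil_poly)
  then show "degree (pencil_poly d c q a b) = d"
    using degree_pencil_poly_le le_antisym by blast
  have "d \<le> degree (map_poly (\<lambda>p. poly p x) (pencil_poly d c q a b))"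
    using assms by (intro le_degree) (simp add: coeff_map_poly coeff_pencil_poly)
  then show "degree (map_poly (\<lambda>p. poly p x) (pencil_poly d c q a b)) = d"
    using degree_map_poly_le[of "\<lambda>p. poly p x" "pencil_poly d c q a b"]
      degree_pencil_poly_le[of d c q a b] by linarith
qed

definition restriction_poly :: "nat \<Rightarrow> (nat \<Rightarrow> nat \<Rightarrow> complex) \<Rightarrow> pt3 \<Rightarrow> pt3 \<Rightarrow> complex poly" where
  "restriction_poly d c q w = map_poly (\<lambda>p. poly p 0) (pencil_poly d c q w (0, 0, 0))"

lemma poly_restriction_poly: "poly (restriction_poly d c q w) z = hpoly d c (w + smult3 z q)"
  using poly2_pencil_poly[of d c q w "(0, 0, 0)" z 0]
  by (cases w, cases q) (simp add: poly2_def restriction_poly_def)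

lemma map_poly_pencil_poly:
  "map_poly (\<lambda>p. poly p x) (pencil_poly d c q a b) = restriction_poly d c q (a + smult3 x b)"
proof -
  have "poly (map_poly (\<lambda>p. poly p x) (pencil_poly d c q a b))
      = poly (restriction_poly d c q (a + smult3 x b))"
  proof
    fix z
    show "poly (map_poly (\<lambda>p. poly p x) (pencil_poly d c q a b)) z
        = poly (restriction_poly d c q (a + smult3 x b)) z"
      using poly2_pencil_poly[of d c q a b z x] by (simp add: poly2_def poly_restriction_poly)
  qed
  then show ?thesis
    by (simp only: poly_eq_poly_eq_iff)
qed

lemma degree_restriction_poly: "hpoly d c q \<noteq> 0 \<Longrightarrow> degree (restriction_poly d c q w) = d"
  using degree_pencil_poly(2)[where a=w and b="(0, 0, 0)" and x=0] by (simp add: restriction_poly_def)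

lemma resultant_pencil_poly:
  assumes "hpoly d c q \<noteq> 0" "hpoly d c' q \<noteq> 0"
  shows "poly (resultant (pencil_poly d c q a b) (pencil_poly d c' q a b)) x
    = resultant (restriction_poly d c q (a + smult3 x b)) (restriction_poly d c' q (a + smult3 x b))"
proof -
  have "comm_ring_hom (\<lambda>p. poly p x)"
    by unfold_locales auto
  then show ?thesis
    using comm_ring_hom.resultant_map_poly[of "\<lambda>p. poly p x" "pencil_poly d c q a b" "pencil_poly d c' q a b"]
    by (simp add: degree_pencil_poly degree_restriction_poly assms map_poly_pencil_poly)
qed

lemma resultant_eq_0_iff_common_root:
  fixes p r :: "complex poly"
  assumes "p \<noteq> 0"
  shows "resultant p r = 0 \<longleftrightarrow> (\<exists>z. poly p z = 0 \<and> poly r z = 0)"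
proof
  assume "resultant p r = 0"
  then have "\<not> constant (poly (gcd p r))"
    by (simp add: resultant_0_gcd constant_degree)
  then obtain z where "poly (gcd p r) z = 0"
    using fundamental_theorem_of_algebra by blast
  then show "\<exists>z. poly p z = 0 \<and> poly r z = 0"
    by (metis dvd_trans gcd_dvd1 gcd_dvd2 poly_eq_0_iff_dvd)
next
  assume "\<exists>z. poly p z = 0 \<and> poly r z = 0"
  then obtain z where "[:-z, 1:] dvd gcd p r"
    by (auto simp: poly_eq_0_iff_dvd)
  moreover have "gcd p r \<noteq> 0"
    using assms by simp
  ultimately have "degree [:-z, 1:] \<le> degree (gcd p r)"
    by (rule dvd_imp_degree_le)
  then show "resultant p r = 0"
    by (simp add: resultant_0_gcd)
qed

(* Without roots on a line avoiding the origin, \<Phi> is constant there; so \<Phi> x 0 = \<Phi> 1 1 for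
   x \<noteq> 0, and the polynomial t \<mapsto> \<Phi> t 0 keeps this value at t = 0. *)
lemma nonzero_at_origin_if_polynomial_on_lines:
  fixes \<Phi> :: "complex \<Rightarrow> complex \<Rightarrow> complex"
  assumes lines: "\<And>a1 a2 b1 b2. \<exists>R. \<forall>t. \<Phi> (a1 + t * b1) (a2 + t * b2) = poly R t"
    and nonzero: "\<And>x y. (x, y) \<noteq> (0, 0) \<Longrightarrow> \<Phi> x y \<noteq> 0"
  shows "\<Phi> 0 0 \<noteq> 0"
proof -
  have constant_on_line: "\<Phi> (a1 + t * b1) (a2 + t * b2) = \<Phi> a1 a2"
    if avoids: "\<And>t. (a1 + t * b1, a2 + t * b2) \<noteq> (0, 0)" for a1 a2 b1 b2 t
  proof -
    obtain R where R: "\<And>t. \<Phi> (a1 + t * b1) (a2 + t * b2) = poly R t"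
      using lines by blast
    have "poly R t \<noteq> 0" for t
      using nonzero[OF avoids] R by metis
    then have "constant (poly R)"
      using fundamental_theorem_of_algebra by blast
    then show ?thesis
      using R[of t] R[of 0] unfolding constant_def by simp
  qed
  have "\<Phi> x 0 = \<Phi> 1 1" if "x \<noteq> 0" for x
    using constant_on_line[of x "1 - x" 0 1 1] that by (force simp: algebra_simps)
  obtain R where R: "\<And>t. \<Phi> t 0 = poly R t"
    using lines[of 0 1 0 0] by auto
  have "R = [:\<Phi> 1 1:]"
  proof (rule ccontr)
    assume "R \<noteq> [:\<Phi> 1 1:]"
    then have "finite {t. poly (R - [:\<Phi> 1 1:]) t = 0}"
      by (intro poly_roots_finite) simp
    moreover have "UNIV - {0} \<subseteq> {t. poly (R - [:\<Phi> 1 1:]) t = 0}"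
      using R \<open>\<And>x. x \<noteq> 0 \<Longrightarrow> \<Phi> x 0 = \<Phi> 1 1\<close> by auto
    ultimately show False
      using infinite_UNIV_char_0 finite_subset by (metis finite_insert insert_Diff_single insert_UNIV)
  qed
  then show ?thesis
    using R[of 0] nonzero[of 1 1] by simp
qed

(* With q a point where neither form vanishes, \<Phi> x y is the resultant of the two forms
   restricted to the line through (x, y, 0) in direction q.  It vanishes at the origin, where both
   restrictions are multiples of z^d, but nowhere else unless the forms have a common zero. *)
lemma forms_have_common_zero:
  assumes "d \<ge> 1" and "\<exists>i j. i + j \<le> d \<and> c i j \<noteq> 0" and "\<exists>i j. i + j \<le> d \<and> c' i j \<noteq> 0"
  shows "\<exists>v. v \<noteq> (0, 0, 0) \<and> hpoly d c v = 0 \<and> hpoly d c' v = 0"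
proof (rule ccontr)
  assume no_common_zero: "\<nexists>v. v \<noteq> (0, 0, 0) \<and> hpoly d c v = 0 \<and> hpoly d c' v = 0"
  obtain x0 y0 where "hpoly d c (x0, y0, 1) \<noteq> 0" "hpoly d c' (x0, y0, 1) \<noteq> 0"
    using forms_nonzero_at_common_point assms(2,3) by blast
  moreover define q :: pt3 where "q = (x0, y0, 1)"
  ultimately have Fq: "hpoly d c q \<noteq> 0" and Gq: "hpoly d c' q \<noteq> 0"
    by simp_all
  have restriction_nonzero: "restriction_poly d c q w \<noteq> 0" for w
    using degree_restriction_poly[OF Fq] assms(1) by (metis degree_0 not_one_le_zero)
  define \<Phi> where "\<Phi> x y = resultant (restriction_poly d c q (x, y, 0)) (restriction_poly d c' q (x, y, 0))"
    for x y
  have polynomial_on_lines: "\<exists>R. \<forall>t. \<Phi> (a1 + t * b1) (a2 + t * b2) = poly R t" for a1 a2 b1 b2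
  proof (intro exI allI)
    fix t
    show "\<Phi> (a1 + t * b1) (a2 + t * b2)
        = poly (resultant (pencil_poly d c q (a1, a2, 0) (b1, b2, 0)) (pencil_poly d c' q (a1, a2, 0) (b1, b2, 0))) t"
      using resultant_pencil_poly[OF Fq Gq, of "(a1, a2, 0)" "(b1, b2, 0)" t] by (simp add: \<Phi>_def)
  qed
  have nonzero_off_origin: "\<Phi> x y \<noteq> 0" if "(x, y) \<noteq> (0, 0)" for x y
  proof
    assume "\<Phi> x y = 0"
    then obtain z where "hpoly d c ((x, y, 0) + smult3 z q) = 0" "hpoly d c' ((x, y, 0) + smult3 z q) = 0"
      unfolding \<Phi>_def resultant_eq_0_iff_common_root[OF restriction_nonzero]
      by (auto simp: poly_restriction_poly)
    moreover have "(x, y, 0) + smult3 z q \<noteq> (0, 0, 0)"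
      using that by (auto simp: q_def)
    ultimately show False
      using no_common_zero by blast
  qed
  have "\<Phi> 0 0 \<noteq> 0"
    using polynomial_on_lines nonzero_off_origin by (rule nonzero_at_origin_if_polynomial_on_lines)
  moreover have "\<Phi> 0 0 = 0"
    unfolding \<Phi>_def resultant_eq_0_iff_common_root[OF restriction_nonzero]
    using hpoly_origin[OF assms(1)] by (auto simp: poly_restriction_poly q_def intro!: exI[of _ 0])
  ultimately show False
    by contradiction
qed

lemma curves_meet:
  assumes "d \<ge> 1" and "\<exists>i j. i + j \<le> d \<and> c i j \<noteq> 0" and "\<exists>i j. i + j \<le> d \<and> c' i j \<noteq> 0"
  shows "curve d c \<inter> curve d c' \<noteq> {}"
proof -
  obtain v where "v \<noteq> (0, 0, 0)" "hpoly d c v = 0" "hpoly d c' v = 0"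
    using forms_have_common_zero[OF assms] by blast
  then have "proj v \<in> curve d c \<inter> curve d c'"
    by (simp add: proj_in_curve_iff)
  then show ?thesis
    by blast
qed

section \<open>Transversal curves meet in finitely many points\<close>

lemma isolated_solution_if_injective_derivative:
  fixes f :: "'a::euclidean_space \<Rightarrow> 'b::euclidean_space"
  assumes f': "(f has_derivative f') (at x)" and inj: "\<And>h. f' h = 0 \<Longrightarrow> h = 0"
  shows "eventually (\<lambda>y. f y = f x \<longrightarrow> y = x) (nhds x)"
proof -
  have "linear f'"
    using f' has_derivative_linear by blast
  moreover from this inj have "inj f'"
    by (simp add: linear_inj_iff_eq_0)
  ultimately obtain B where "B > 0" and B: "\<And>h. B * norm h \<le> norm (f' h)"
    using linear_inj_bounded_below_pos by blast
  then have "B / 2 > 0"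
    by simp
  with f' obtain \<delta> where "\<delta> > 0"
    and \<delta>: "\<And>y. norm (y - x) < \<delta> \<Longrightarrow> norm (f y - f x - f' (y - x)) \<le> B / 2 * norm (y - x)"
    unfolding has_derivative_at_alt by blast
  show ?thesis
    unfolding eventually_nhds_metric
  proof (intro exI conjI allI impI)
    fix y assume "dist y x < \<delta>" "f y = f x"
    then have "B * norm (y - x) \<le> B / 2 * norm (y - x)"
      using B[of "y - x"] \<delta>[of y] by (simp add: dist_norm)
    with \<open>B > 0\<close> show "y = x"
      by simp
  qed (fact \<open>\<delta> > 0\<close>)
qed

lemma transversal_common_zero_unique_on_slice:
  assumes "v \<noteq> (0, 0, 0)" "hpoly d c v = 0" "hpoly d c' v = 0"
    and "Defs.cross3 (hgrad d c v) (hgrad d c' v) \<noteq> (0, 0, 0)"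
  shows "eventually (\<lambda>w. hpoly d c w = 0 \<and> hpoly d c' w = 0 \<and> dot3 (cnj3 v) w = dot3 (cnj3 v) v
    \<longrightarrow> w = v) (nhds v)"
proof -
  define \<Phi> where "\<Phi> w = (hpoly d c w, hpoly d c' w, dot3 (cnj3 v) w)" for w
  have "(\<Phi> has_derivative (\<lambda>h. (dot3 (hgrad d c v) h, dot3 (hgrad d c' v) h, dot3 (cnj3 v) h))) (at v)"
    unfolding \<Phi>_def by (intro has_derivative_Pair hpoly_has_derivative dot3_has_derivative)
  moreover have "h = 0"
    if "(dot3 (hgrad d c v) h, dot3 (hgrad d c' v) h, dot3 (cnj3 v) h) = 0" for h
    using dot3_kernel_trivial[OF assms(4,1)] euler[of d c v] euler[of d c' v] assms(2,3) that
    by (simp add: dot3_commute zero_prod_def)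
  ultimately have "eventually (\<lambda>w. \<Phi> w = \<Phi> v \<longrightarrow> w = v) (nhds v)"
    by (rule isolated_solution_if_injective_derivative)
  then show ?thesis
    by (simp add: \<Phi>_def assms(2,3))
qed

(* Rescaling a nearby common zero w into the affine plane dot3 (cnj3 v) w = dot3 (cnj3 v) v
   moves it close to v, where it must coincide with v. *)
lemma transversal_common_zeros_near:
  assumes "v \<noteq> (0, 0, 0)" "hpoly d c v = 0" "hpoly d c' v = 0"
    and "Defs.cross3 (hgrad d c v) (hgrad d c' v) \<noteq> (0, 0, 0)"
  shows "eventually (\<lambda>w. hpoly d c w = 0 \<longrightarrow> hpoly d c' w = 0 \<longrightarrow> (\<exists>a. w = smult3 a v)) (nhds v)"
proof -
  define e where "e = cnj3 v"
  have ev: "dot3 e v \<noteq> 0"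
    using assms(1) by (simp add: e_def dot3_cnj3_self_nonzero)
  define s where "s w = smult3 (dot3 e v / dot3 e w) w" for w
  have "isCont s v"
    unfolding s_def smult3_eq dot3_def using ev
    by (intro continuous_intros) (simp_all add: dot3_def)
  moreover have "s v = v"
    using ev by (cases v) (simp add: s_def)
  ultimately have "filterlim s (nhds v) (nhds v)"
    unfolding isCont_def tendsto_at_iff_tendsto_nhds by simp
  with transversal_common_zero_unique_on_slice[OF assms]
  have "eventually (\<lambda>w. hpoly d c (s w) = 0 \<and> hpoly d c' (s w) = 0 \<and> dot3 e (s w) = dot3 e v
      \<longrightarrow> s w = v) (nhds v)"
    unfolding e_def by (rule eventually_compose_filterlim)
  moreover have "eventually (\<lambda>w. dot3 e w \<noteq> 0) (nhds v)"
  proof (rule tendsto_imp_eventually_ne)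
    have "isCont (dot3 e) v"
      using dot3_has_derivative by (rule has_derivative_continuous)
    then show "(dot3 e \<longlongrightarrow> dot3 e v) (nhds v)"
      by (simp add: isCont_def tendsto_at_iff_tendsto_nhds)
  qed (fact ev)
  ultimately show ?thesis
  proof eventually_elim
    case (elim w)
    define a where "a = dot3 e v / dot3 e w"
    have "a \<noteq> 0"
      using ev elim(2) by (simp add: a_def)
    show ?case
    proof (intro impI)
      assume "hpoly d c w = 0" "hpoly d c' w = 0"
      then have "smult3 a w = v"
        using elim by (simp add: s_def a_def hpoly_smult3 dot3_smult3_right)
      then have "w = smult3 (1 / a) v"
        using \<open>a \<noteq> 0\<close> by (auto simp: smult3_smult3)
      then show "\<exists>a. w = smult3 a v" ..
    qed
  qed
qed

lemma common_zeros_on_sphere_finite_cover: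
  assumes transversal: "\<And>v. v \<noteq> (0, 0, 0) \<Longrightarrow> hpoly d c v = 0 \<Longrightarrow> hpoly d c' v = 0
      \<Longrightarrow> Defs.cross3 (hgrad d c v) (hgrad d c' v) \<noteq> (0, 0, 0)"
  obtains T where "finite T"
    and "\<And>w. norm w = 1 \<Longrightarrow> hpoly d c w = 0 \<Longrightarrow> hpoly d c' w = 0 \<Longrightarrow> \<exists>t\<in>T. \<exists>a. w = smult3 a t"
proof -
  define K where "K = sphere (0 :: pt3) 1 \<inter> {v. hpoly d c v = 0} \<inter> {v. hpoly d c' v = 0}"
  have "compact K"
    unfolding K_def by (intro compact_Int_closed closed_hpoly_zeros compact_sphere)
  have "\<forall>v\<in>K. \<exists>U. open U \<and> v \<in> U
      \<and> (\<forall>w\<in>U. hpoly d c w = 0 \<longrightarrow> hpoly d c' w = 0 \<longrightarrow> (\<exists>a. w = smult3 a v))"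
  proof
    fix v assume "v \<in> K"
    then have "v \<noteq> (0, 0, 0)" "hpoly d c v = 0" "hpoly d c' v = 0"
      by (auto simp: K_def zero_prod_def)
    with transversal have "eventually (\<lambda>w. hpoly d c w = 0 \<longrightarrow> hpoly d c' w = 0 \<longrightarrow> (\<exists>a. w = smult3 a v))
        (nhds v)"
      by (intro transversal_common_zeros_near)
    then show "\<exists>U. open U \<and> v \<in> U
        \<and> (\<forall>w\<in>U. hpoly d c w = 0 \<longrightarrow> hpoly d c' w = 0 \<longrightarrow> (\<exists>a. w = smult3 a v))"
      unfolding eventually_nhds .
  qed
  from bchoice[OF this] obtain U where U: "\<forall>v\<in>K. open (U v) \<and> v \<in> U v
      \<and> (\<forall>w\<in>U v. hpoly d c w = 0 \<longrightarrow> hpoly d c' w = 0 \<longrightarrow> (\<exists>a. w = smult3 a v))"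
    by blast
  obtain T where "T \<subseteq> K" "finite T" and cover: "K \<subseteq> (\<Union>v\<in>T. U v)"
    using compactE_image[OF \<open>compact K\<close>, of K U] U by blast
  show thesis
  proof (rule that[OF \<open>finite T\<close>])
    fix w assume "norm w = 1" "hpoly d c w = 0" "hpoly d c' w = 0"
    then have "w \<in> K"
      by (simp add: K_def)
    then obtain t where "t \<in> T" "w \<in> U t"
      using cover by blast
    moreover from this have "t \<in> K"
      using \<open>T \<subseteq> K\<close> by blast
    ultimately show "\<exists>t\<in>T. \<exists>a. w = smult3 a t"
      using U \<open>hpoly d c w = 0\<close> \<open>hpoly d c' w = 0\<close> by blast
  qed
qed

lemma finite_transversal_intersection:
  assumes "\<And>v. v \<noteq> (0, 0, 0) \<Longrightarrow> hpoly d c v = 0 \<Longrightarrow> hpoly d c' v = 0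
      \<Longrightarrow> Defs.cross3 (hgrad d c v) (hgrad d c' v) \<noteq> (0, 0, 0)"
  shows "finite (curve d c \<inter> curve d c')"
proof -
  obtain T where "finite T"
    and cover: "\<And>w. norm w = 1 \<Longrightarrow> hpoly d c w = 0 \<Longrightarrow> hpoly d c' w = 0 \<Longrightarrow> \<exists>t\<in>T. \<exists>a. w = smult3 a t"
    using common_zeros_on_sphere_finite_cover[OF assms] by blast
  have "curve d c \<inter> curve d c' \<subseteq> proj ` T"
  proof
    fix P assume P: "P \<in> curve d c \<inter> curve d c'"
    then obtain w where w: "P = proj w" "w \<noteq> (0, 0, 0)"
      unfolding curve_def by blast
    with P have "hpoly d c w = 0" "hpoly d c' w = 0"
      using proj_in_curve_iff by blast+
    have "norm w \<noteq> 0"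
      using w(2) by (simp add: zero_prod_def)
    define w' where "w' = smult3 (of_real (1 / norm w)) w"
    have "norm w' = 1"
      unfolding w'_def smult3_of_real using \<open>norm w \<noteq> 0\<close> by simp
    moreover have "hpoly d c w' = 0" "hpoly d c' w' = 0"
      using \<open>hpoly d c w = 0\<close> \<open>hpoly d c' w = 0\<close> by (simp_all only: w'_def hpoly_smult3 mult_zero_right)
    ultimately obtain t a where "t \<in> T" "w' = smult3 a t"
      using cover by blast
    moreover have "a \<noteq> 0"
    proof
      assume "a = 0"
      with \<open>w' = smult3 a t\<close> have "norm w' = 0"
        by (simp add: zero_prod_def)
      with \<open>norm w' = 1\<close> show False
        by simp
    qed
    moreover have "proj w' = P"
      using \<open>norm w \<noteq> 0\<close> unfolding w'_def w(1) by (intro proj_smult3) simp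
    ultimately show "P \<in> proj ` T"
      using proj_smult3 by auto
  qed
  moreover have "finite (proj ` T)"
    using \<open>finite T\<close> by simp
  ultimately show ?thesis
    by (rule finite_subset)
qed

section \<open>The induced hexagon\<close>

lemma set_family_triangle:
  fixes C :: "'i \<Rightarrow> 'a set"
  assumes "i0 \<in> I" "j0 \<in> I" "i0 \<noteq> j0"
    and pairwise: "\<And>i j. i \<in> I \<Longrightarrow> j \<in> I \<Longrightarrow> i \<noteq> j \<Longrightarrow> finite (C i \<inter> C j) \<and> C i \<inter> C j \<noteq> {}"
    and no_common_point: "(\<Inter>i\<in>I. C i) = {}"
  obtains i j l P Q R where "i \<in> I" "j \<in> I" "l \<in> I"
    and "P \<in> C i \<inter> C j - C l" "Q \<in> C j \<inter> C l - C i" "R \<in> C l \<inter> C i - C j"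
proof -
  define pairs where "pairs = {(i, j). i \<in> I \<and> j \<in> I \<and> i \<noteq> j}"
  have "(i0, j0) \<in> pairs"
    using assms(1-3) by (simp add: pairs_def)
  then obtain p where "p \<in> pairs"
    and least: "\<And>p'. p' \<in> pairs \<Longrightarrow> card (C (fst p) \<inter> C (snd p)) \<le> card (C (fst p') \<inter> C (snd p'))"
    using ex_has_least_nat[of "\<lambda>p. p \<in> pairs" "(i0, j0)" "\<lambda>p. card (C (fst p) \<inter> C (snd p))"]
    by blast
  define i j where "i = fst p" and "j = snd p"
  have ij: "i \<in> I" "j \<in> I" "i \<noteq> j"
    using \<open>p \<in> pairs\<close> by (auto simp: pairs_def i_def j_def)
  then obtain P where P: "P \<in> C i \<inter> C j"
    using pairwise by blast
  then obtain l where "l \<in> I" "P \<notin> C l"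
    using no_common_point by blast
  have no_smaller_pair: False
    if "i' \<in> I" "j' \<in> I" "i' \<noteq> j'" "C i' \<inter> C j' \<subseteq> C i \<inter> C j - {P}" for i' j'
  proof -
    have "card (C i' \<inter> C j') \<le> card (C i \<inter> C j - {P})"
      using that(4) pairwise[OF ij] by (intro card_mono) auto
    also have "\<dots> < card (C i \<inter> C j)"
      using pairwise[OF ij] P by (intro card_Diff1_less) auto
    finally show False
      using least[of "(i', j')"] that(1-3) by (simp add: pairs_def i_def j_def)
  qed
  have "l \<noteq> i" "l \<noteq> j"
    using P \<open>P \<notin> C l\<close> by auto
  have "\<not> C j \<inter> C l \<subseteq> C i"
    using no_smaller_pair[of j l] ij \<open>l \<in> I\<close> \<open>l \<noteq> j\<close> \<open>P \<notin> C l\<close> by blast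
  then obtain Q where "Q \<in> C j \<inter> C l - C i"
    by blast
  have "\<not> C l \<inter> C i \<subseteq> C j"
    using no_smaller_pair[of l i] ij \<open>l \<in> I\<close> \<open>l \<noteq> i\<close> \<open>P \<notin> C l\<close> by blast
  then obtain R where "R \<in> C l \<inter> C i - C j"
    by blast
  show thesis
    using that ij \<open>l \<in> I\<close> P \<open>P \<notin> C l\<close> \<open>Q \<in> C j \<inter> C l - C i\<close> \<open>R \<in> C l \<inter> C i - C j\<close> by blast
qed

(* The finiteness hypothesis matters: t_count is a cardinality, which is 0 for infinite sets. *)
lemma no_point_on_all_curves:
  assumes "t_count d k cs k = 0" and "k \<ge> 2" and "finite (curve d (cs 0) \<inter> curve d (cs 1))"
  shows "(\<Inter>i<k. curve d (cs i)) = {}"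
proof -
  define X where "X = {P \<in> sing_locus d k cs. card {i. i < k \<and> P \<in> curve d (cs i)} = k}"
  have X_full: "{i. i < k \<and> P \<in> curve d (cs i)} = {..<k}" if "P \<in> X" for P
    using that card_subset_eq[of "{..<k}" "{i. i < k \<and> P \<in> curve d (cs i)}"] by (auto simp: X_def)
  have "X \<subseteq> curve d (cs 0) \<inter> curve d (cs 1)"
  proof
    fix P assume "P \<in> X"
    then have "0 \<in> {i. i < k \<and> P \<in> curve d (cs i)}" "1 \<in> {i. i < k \<and> P \<in> curve d (cs i)}"
      using X_full assms(2) by auto
    then show "P \<in> curve d (cs 0) \<inter> curve d (cs 1)"
      by simp
  qed
  then have "finite X"
    using assms(3) by (rule finite_subset)
  moreover have "card X = 0"
    using assms(1) by (simp add: t_count_def X_def)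
  ultimately have "X = {}"
    by simp
  moreover have "P \<in> X" if "P \<in> (\<Inter>i<k. curve d (cs i))" for P
  proof -
    have "{i. i < k \<and> P \<in> curve d (cs i)} = {..<k}"
      using that by blast
    moreover have "P \<in> sing_locus d k cs"
      using that assms(2) unfolding sing_locus_def by (intro CollectI exI[of _ 0] exI[of _ 1]) auto
    ultimately show "P \<in> X"
      by (simp add: X_def)
  qed
  ultimately show ?thesis
    by blast
qed

lemma levi_induced_hexagon:
  assumes "i < k" "j < k" "l < k"
    and P: "P \<in> curve d (cs i) \<inter> curve d (cs j) - curve d (cs l)"
    and Q: "Q \<in> curve d (cs j) \<inter> curve d (cs l) - curve d (cs i)"
    and R: "R \<in> curve d (cs l) \<inter> curve d (cs i) - curve d (cs j)"
  shows "induced_cycle (levi_vertices d k cs) (levi_adj d k cs) [Inl P, Inr j, Inl Q, Inr l, Inl R, Inr i]"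
proof -
  have "i \<noteq> j" "j \<noteq> l" "l \<noteq> i"
    using P Q R by auto
  then have sing: "P \<in> sing_locus d k cs" "Q \<in> sing_locus d k cs" "R \<in> sing_locus d k cs"
    using assms unfolding sing_locus_def by blast+
  have "P \<noteq> Q" "Q \<noteq> R" "R \<noteq> P"
    using P Q R by auto
  define cyc :: "(pt3 set + nat) list" where "cyc = [Inl P, Inr j, Inl Q, Inr l, Inl R, Inr i]"
  have "levi_adj d k cs (cyc ! a) (cyc ! b) \<longleftrightarrow> (b = Suc a mod 6 \<or> a = Suc b mod 6)"
    if "a < 6" "b < 6" for a b
  proof -
    have "a = 0 \<or> a = 1 \<or> a = 2 \<or> a = 3 \<or> a = 4 \<or> a = 5" "b = 0 \<or> b = 1 \<or> b = 2 \<or> b = 3 \<or> b = 4 \<or> b = 5"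
      using that by auto
    then show ?thesis
      using assms sing \<open>i \<noteq> j\<close> \<open>j \<noteq> l\<close> \<open>l \<noteq> i\<close> by (elim disjE) (simp_all add: cyc_def)
  qed
  moreover have "set cyc \<subseteq> levi_vertices d k cs"
    using sing assms by (auto simp: cyc_def levi_vertices_def)
  ultimately show ?thesis
    using \<open>P \<noteq> Q\<close> \<open>Q \<noteq> R\<close> \<open>R \<noteq> P\<close> \<open>i \<noteq> j\<close> \<open>j \<noteq> l\<close> \<open>l \<noteq> i\<close>
    unfolding induced_cycle_def by (simp add: cyc_def)
qed

theorem theorem5p1:
  fixes d k :: nat and cs :: "nat \<Rightarrow> nat \<Rightarrow> nat \<Rightarrow> complex"
  assumes "d_arrangement d k cs"
    and "t_count d k cs k = 0"
  shows "\<exists>cyc. induced_cycle (levi_vertices d k cs) (levi_adj d k cs) cyc \<and> length cyc = 6"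
proof -
  have "d \<ge> 1" "k \<ge> 3"
    and nonzero: "\<And>i. i < k \<Longrightarrow> \<exists>a b. a + b \<le> d \<and> cs i a b \<noteq> 0"
    and transversal: "\<And>i j v. i < k \<Longrightarrow> j < k \<Longrightarrow> i \<noteq> j \<Longrightarrow> v \<noteq> (0, 0, 0)
      \<Longrightarrow> hpoly d (cs i) v = 0 \<Longrightarrow> hpoly d (cs j) v = 0
      \<Longrightarrow> Defs.cross3 (hgrad d (cs i) v) (hgrad d (cs j) v) \<noteq> (0, 0, 0)"
    using assms(1) unfolding d_arrangement_def smooth_curve_def by blast+
  have meet_finitely: "finite (curve d (cs i) \<inter> curve d (cs j)) \<and> curve d (cs i) \<inter> curve d (cs j) \<noteq> {}"
    if "i \<in> {..<k}" "j \<in> {..<k}" "i \<noteq> j" for i j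
  proof
    from that have "i < k" "j < k"
      by simp_all
    show "finite (curve d (cs i) \<inter> curve d (cs j))"
      using transversal[OF \<open>i < k\<close> \<open>j < k\<close> \<open>i \<noteq> j\<close>] by (rule finite_transversal_intersection)
    show "curve d (cs i) \<inter> curve d (cs j) \<noteq> {}"
      using \<open>d \<ge> 1\<close> nonzero[OF \<open>i < k\<close>] nonzero[OF \<open>j < k\<close>] by (rule curves_meet)
  qed
  have "0 \<in> {..<k}" "1 \<in> {..<k}"
    using \<open>k \<ge> 3\<close> by simp_all
  then have no_common_point: "(\<Inter>i<k. curve d (cs i)) = {}"
    using no_point_on_all_curves[OF assms(2)] meet_finitely[of 0 1] \<open>k \<ge> 3\<close> by simp
  obtain i j l P Q R where "i \<in> {..<k}" "j \<in> {..<k}" "l \<in> {..<k}"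
    and "P \<in> curve d (cs i) \<inter> curve d (cs j) - curve d (cs l)"
    and "Q \<in> curve d (cs j) \<inter> curve d (cs l) - curve d (cs i)"
    and "R \<in> curve d (cs l) \<inter> curve d (cs i) - curve d (cs j)"
    by (rule set_family_triangle[OF \<open>0 \<in> {..<k}\<close> \<open>1 \<in> {..<k}\<close> zero_neq_one meet_finitely no_common_point])
  then have "induced_cycle (levi_vertices d k cs) (levi_adj d k cs) [Inl P, Inr j, Inl Q, Inr l, Inl R, Inr i]"
    by (intro levi_induced_hexagon) simp_all
  moreover have "length [Inl P, Inr j, Inl Q, Inr l, Inl R, Inr i] = 6"
    by simp
  ultimately show ?thesis
    by blast
qed

end
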